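(* Let $M,N:\mathbf{R}^d\to\mathbf{Vec}$ be interval decomposable persistence modules with barcodes $\mathcal{B}(M)$ and $\mathcal{B}(N)$. Then \[d_{\mathrm{I},2d}(\mathrm{rk}(M),\mathrm{rk}(N))\le d_{\mathrm{B}}(\mathcal{B}(M),\mathcal{B}(N)).\]
   Context: $\mathbf{R}^d$ has the product order; a persistence module $M:\mathbf{R}^d\to\mathbf{Vec}$ (vector spaces over a fixed field) consists of spaces $M_\mathbf{a}$ and linear maps $\varphi_M(\mathbf{a},\mathbf{b}):M_\mathbf{a}\to M_\mathbf{b}$ for $\mathbf{a}\le\mathbf{b}$, functorially. For $\varepsilon\ge0$ let $\vec\varepsilon=\varepsilon(1,\dots,1)$. Modules $M,N$ are $\varepsilon$-interleaved if there are natural families $f_\mathbf{a}:M_\mathbf{a}\to N_{\mathbf{a}+\vec\varepsilon}$, $g_\mathbf{a}:N_\mathbf{a}\to M_{\mathbf{a}+\vec\varepsilon}$ with $g_{\mathbf{a}+\vec\varepsilon}f_\mathbf{a}=\varphi_M(\mathbf{a},\mathbf{a}+2\vec\varepsilon)$ and $f_{\mathbf{a}+\vec\varepsilon}g_\mathbf{a}=\varphi_N(\mathbf{a},\mathbf{a}+2\vec\varepsilon)$. An interval of $\mathbf{R}^d$ is a nonempty subset $J$ that is convex ($\mathbf{a}\le\mathbf{b}\le\mathbf{c}$, $\mathbf{a},\mathbf{c}\in J\Rightarrow\mathbf{b}\in J$) and connected (any two points linked by a finite zigzag of comparable points in $J$); its interval module has the field at points of $J$, zero elsewhere, and identity maps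 within $J$. $M$ is interval decomposable if it is a direct sum of interval modules; its barcode $\mathcal{B}(M)$ is the multiset of these intervals. An $\varepsilon$-matching between barcodes is a partial bijection $\sigma$ such that for each matched pair $(J,\sigma(J))$ the interval modules of $J$ and $\sigma(J)$ are $\varepsilon$-interleaved, and each unmatched interval's module is $\varepsilon$-interleaved with the zero module; $d_{\mathrm{B}}$ is the infimum of $\varepsilon$ admitting an $\varepsilon$-matching. The rank invariant $\mathrm{rk}(M):\mathbf{R}^d\times\mathbf{R}^d\to\mathbf{Z}_+\cup\{\infty\}$ is $\mathrm{rk}(M)(\mathbf{a},\mathbf{b})=\mathrm{rank}\,\varphi_M(\mathbf{a},\mathbf{b})$ if $\mathbf{a}\le\mathbf{b}$ and $\infty$ otherwise. For $F,G:\mathbf{R}^d\times\mathbf{R}^d\to\mathbf{Z}_+\cup\{\infty\}$, $d_{\mathrm{I},2d}(F,G):=\inf\{\varepsilon\ge0:\forall(\mathbf{a},\mathbf{b}),\ F(\mathbf{a},\mathbf{b})\ge G(\mathbf{a}-\vec\varepsilon,\mathbf{b}+\vec\varepsilon)\text{ and }G(\mathbf{a},\mathbf{b})\ge F(\mathbf{a}-\vec\varepsilon,\mathbf{b}+\vec\varepsilon)\}$. *)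

theory Defs
  imports "HOL-Analysis.Analysis" "HOL-Library.Extended_Nat"
begin

text \<open>A persistence module over a field 'k is given by a scalar multiplication s on an
  ambient abelian group 'v making it a 'k-vector space, a family of subspaces V a
  (the spaces M_a) and maps phi a b : V a -> V b (only their values on V a matter).\<close>

definition diagv :: "real \<Rightarrow> real^'d" where
  "diagv e = (\<chi> i. e)"

definition lin_on ::
  "('k::field \<Rightarrow> 'v::ab_group_add \<Rightarrow> 'v) \<Rightarrow> ('k \<Rightarrow> 'w::ab_group_add \<Rightarrow> 'w)
    \<Rightarrow> 'v set \<Rightarrow> 'w set \<Rightarrow> ('v \<Rightarrow> 'w) \<Rightarrow> bool" where
  "lin_on s1 s2 A B f \<longleftrightarrow> f ` A \<subseteq> B \<and>
     (\<forall>x\<in>A. \<forall>y\<in>A. f (x + y) = f x + f y) \<and>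
     (\<forall>c. \<forall>x\<in>A. f (s1 c x) = s2 c (f x))"

definition pmod ::
  "('k::field \<Rightarrow> 'v::ab_group_add \<Rightarrow> 'v) \<Rightarrow> (real^'d \<Rightarrow> 'v set)
     \<Rightarrow> (real^'d \<Rightarrow> real^'d \<Rightarrow> 'v \<Rightarrow> 'v) \<Rightarrow> bool" where
  "pmod s V phi \<longleftrightarrow> vector_space s \<and>
     (\<forall>a. module.subspace s (V a)) \<and>
     (\<forall>a b. a \<le> b \<longrightarrow> lin_on s s (V a) (V b) (phi a b)) \<and>
     (\<forall>a. \<forall>x\<in>V a. phi a a x = x) \<and>
     (\<forall>a b c. a \<le> b \<longrightarrow> b \<le> c \<longrightarrow> (\<forall>x\<in>V a. phi b c (phi a b x) = phi a c x))"

definition interleaved ::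
  "('k::field \<Rightarrow> 'v::ab_group_add \<Rightarrow> 'v) \<Rightarrow> (real^'d \<Rightarrow> 'v set) \<Rightarrow> (real^'d \<Rightarrow> real^'d \<Rightarrow> 'v \<Rightarrow> 'v)
   \<Rightarrow> ('k \<Rightarrow> 'w::ab_group_add \<Rightarrow> 'w) \<Rightarrow> (real^'d \<Rightarrow> 'w set) \<Rightarrow> (real^'d \<Rightarrow> real^'d \<Rightarrow> 'w \<Rightarrow> 'w)
   \<Rightarrow> real \<Rightarrow> bool" where
  "interleaved s1 V1 phi1 s2 V2 phi2 e \<longleftrightarrow>
    (\<exists>f g. (\<forall>a. lin_on s1 s2 (V1 a) (V2 (a + diagv e)) (f a)) \<and>
           (\<forall>a. lin_on s2 s1 (V2 a) (V1 (a + diagv e)) (g a)) \<and>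
           (\<forall>a b. a \<le> b \<longrightarrow> (\<forall>x\<in>V1 a. f b (phi1 a b x) = phi2 (a + diagv e) (b + diagv e) (f a x))) \<and>
           (\<forall>a b. a \<le> b \<longrightarrow> (\<forall>y\<in>V2 a. g b (phi2 a b y) = phi1 (a + diagv e) (b + diagv e) (g a y))) \<and>
           (\<forall>a. \<forall>x\<in>V1 a. g (a + diagv e) (f a x) = phi1 a (a + diagv (2 * e)) x) \<and>
           (\<forall>a. \<forall>y\<in>V2 a. f (a + diagv e) (g a y) = phi2 a (a + diagv (2 * e)) y))"

definition is_interval_pm :: "(real^'d) set \<Rightarrow> bool" where
  "is_interval_pm J \<longleftrightarrow> J \<noteq> {} \<and>
     (\<forall>a b c. a \<in> J \<longrightarrow> c \<in> J \<longrightarrow> a \<le> b \<longrightarrow> b \<le> c \<longrightarrow> b \<in> J) \<and>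
     (\<forall>x\<in>J. \<forall>y\<in>J. (x, y) \<in> {(p, q). p \<in> J \<and> q \<in> J \<and> (p \<le> q \<or> q \<le> p)}\<^sup>*)"

text \<open>Interval module of J over the field 'k (the field regarded as a vector space
  over itself) and the zero module.\<close>
definition ivsp :: "(real^'d) set \<Rightarrow> real^'d \<Rightarrow> 'k::field set" where
  "ivsp J a = (if a \<in> J then UNIV else {0})"

definition ivmap :: "(real^'d) set \<Rightarrow> real^'d \<Rightarrow> real^'d \<Rightarrow> 'k::field \<Rightarrow> 'k" where
  "ivmap J a b x = (if a \<in> J \<and> b \<in> J then x else 0)"

definition zsp :: "real^'d \<Rightarrow> 'k::field set" where
  "zsp a = {0}"

definition zmap :: "real^'d \<Rightarrow> real^'d \<Rightarrow> 'k::field \<Rightarrow> 'k" where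
  "zmap a b x = 0"

text \<open>Interval decomposition: M is (internally) the direct sum of interval submodules
  indexed by I, the i-th one supported on the interval J i, spanned at a \<in> J i by the
  vector e i a.  This is exactly an isomorphism of M with the direct sum of the interval
  modules of the J i; the barcode is the indexed family (multiset) J over I.\<close>
definition interval_decomp ::
  "('k::field \<Rightarrow> 'v::ab_group_add \<Rightarrow> 'v) \<Rightarrow> (real^'d \<Rightarrow> 'v set) \<Rightarrow> (real^'d \<Rightarrow> real^'d \<Rightarrow> 'v \<Rightarrow> 'v)
    \<Rightarrow> 'i set \<Rightarrow> ('i \<Rightarrow> (real^'d) set) \<Rightarrow> bool" where
  "interval_decomp s V phi I J \<longleftrightarrow> (\<forall>i\<in>I. is_interval_pm (J i)) \<and>
    (\<exists>e :: 'i \<Rightarrow> real^'d \<Rightarrow> 'v.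
       (\<forall>i\<in>I. \<forall>a\<in>J i. e i a \<in> V a) \<and>
       (\<forall>i\<in>I. \<forall>a b. a \<le> b \<longrightarrow> a \<in> J i \<longrightarrow> b \<in> J i \<longrightarrow> phi a b (e i a) = e i b) \<and>
       (\<forall>i\<in>I. \<forall>a b. a \<le> b \<longrightarrow> a \<in> J i \<longrightarrow> b \<notin> J i \<longrightarrow> phi a b (e i a) = 0) \<and>
       (\<forall>a. inj_on (\<lambda>i. e i a) {i\<in>I. a \<in> J i} \<and>
            \<not> module.dependent s ((\<lambda>i. e i a) ` {i\<in>I. a \<in> J i}) \<and>
            module.span s ((\<lambda>i. e i a) ` {i\<in>I. a \<in> J i}) = V a))"

definition eps_matching ::
  "'i set \<Rightarrow> ('i \<Rightarrow> (real^'d) set) \<Rightarrow> 'j set \<Rightarrow> ('j \<Rightarrow> (real^'d) set) \<Rightarrow> 'k::field itself \<Rightarrow> real \<Rightarrow> bool" where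
  "eps_matching I1 J1 I2 J2 (K :: 'k itself) e \<longleftrightarrow>
    (\<exists>D \<sigma>. D \<subseteq> I1 \<and> inj_on \<sigma> D \<and> \<sigma> ` D \<subseteq> I2 \<and>
       (\<forall>i\<in>D. interleaved ((*) :: 'k \<Rightarrow> 'k \<Rightarrow> 'k) (ivsp (J1 i)) (ivmap (J1 i))
                          ((*) :: 'k \<Rightarrow> 'k \<Rightarrow> 'k) (ivsp (J2 (\<sigma> i))) (ivmap (J2 (\<sigma> i))) e) \<and>
       (\<forall>i\<in>I1 - D. interleaved ((*) :: 'k \<Rightarrow> 'k \<Rightarrow> 'k) (ivsp (J1 i)) (ivmap (J1 i))
                          ((*) :: 'k \<Rightarrow> 'k \<Rightarrow> 'k) zsp zmap e) \<and>
       (\<forall>j\<in>I2 - \<sigma> ` D. interleaved ((*) :: 'k \<Rightarrow> 'k \<Rightarrow> 'k) (ivsp (J2 j)) (ivmap (J2 j))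
                          ((*) :: 'k \<Rightarrow> 'k \<Rightarrow> 'k) zsp zmap e))"

text \<open>Bottleneck distance (infimum in the extended reals; Inf of the empty set is \<infinity>).\<close>
definition bottleneck ::
  "'k::field itself \<Rightarrow> 'i set \<Rightarrow> ('i \<Rightarrow> (real^'d) set) \<Rightarrow> 'j set \<Rightarrow> ('j \<Rightarrow> (real^'d) set) \<Rightarrow> ereal" where
  "bottleneck K I1 J1 I2 J2 = Inf {ereal e | e. e \<ge> 0 \<and> eps_matching I1 J1 I2 J2 K e}"

definition rank_on ::
  "('k::field \<Rightarrow> 'v::ab_group_add \<Rightarrow> 'v) \<Rightarrow> 'v set \<Rightarrow> ('v \<Rightarrow> 'v) \<Rightarrow> enat" where
  "rank_on s A f = (if \<exists>B. finite B \<and> f ` A \<subseteq> module.span s B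
                    then enat (vector_space.dim s (f ` A)) else \<infinity>)"

definition rank_inv ::
  "('k::field \<Rightarrow> 'v::ab_group_add \<Rightarrow> 'v) \<Rightarrow> (real^'d \<Rightarrow> 'v set) \<Rightarrow> (real^'d \<Rightarrow> real^'d \<Rightarrow> 'v \<Rightarrow> 'v)
    \<Rightarrow> real^'d \<Rightarrow> real^'d \<Rightarrow> enat" where
  "rank_inv s V phi a b = (if a \<le> b then rank_on s (V a) (phi a b) else \<infinity>)"

definition dist_I2d ::
  "(real^'d \<Rightarrow> real^'d \<Rightarrow> enat) \<Rightarrow> (real^'d \<Rightarrow> real^'d \<Rightarrow> enat) \<Rightarrow> ereal" where
  "dist_I2d F G = Inf {ereal e | e. e \<ge> 0 \<and>
     (\<forall>a b. F a b \<ge> G (a - diagv e) (b + diagv e) \<and> G a b \<ge> F (a - diagv e) (b + diagv e))}"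

end

theory Submission
  imports Defs
begin

text \<open>For \<open>a \<le> b\<close>, the rank of \<open>M(a,b)\<close> for an interval decomposable \<open>M\<close> is the number
  of bars containing both \<open>a\<close> and \<open>b\<close>: the structure map sends the basis vectors of the
  bars through \<open>a\<close> to the basis vectors of the bars through \<open>b\<close> or to zero.
  If the interval modules of \<open>J\<close> and \<open>J'\<close> are \<open>\<epsilon>\<close>-interleaved and \<open>J\<close> contains
  \<open>a - \<epsilon>\<close> and \<open>b + \<epsilon>\<close>, then \<open>1 \<in> J(a - \<epsilon>)\<close> is mapped to \<open>1 \<in> J(b + \<epsilon>)\<close> by a composite
  of interleaving maps factoring through \<open>J'(a) \<rightarrow> J'(b)\<close>, so \<open>J'\<close> contains \<open>a\<close> and \<open>b\<close>.
  The zero module is the interval module of the empty set, so no unmatched bar contains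
  \<open>a - \<epsilon>\<close> and \<open>b + \<epsilon>\<close>. Hence an \<open>\<epsilon>\<close>-matching injects the bars of \<open>M\<close> through
  \<open>(a - \<epsilon>, b + \<epsilon>)\<close> into the bars of \<open>N\<close> through \<open>(a, b)\<close>, which gives
  \<open>rk M (a - \<epsilon>, b + \<epsilon>) \<le> rk N (a, b)\<close>, and symmetrically.\<close>

lemma diff_le_add_of_nonneg:
  fixes a b x :: "'a::ordered_ab_group_add"
  assumes "a \<le> b" "0 \<le> x"
  shows "a - x \<le> b + x"
proof -
  have "a - x \<le> b - x" using assms(1) by (rule diff_right_mono)
  also have "\<dots> \<le> b + x" using assms(2) by (simp add: diff_le_eq add.assoc add_increasing2)
  finally show ?thesis .
qed

lemma diagv_nonneg: "0 \<le> e \<Longrightarrow> 0 \<le> (diagv e :: real^'d)"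
  by (simp add: less_eq_vec_def diagv_def)

lemma diff_diagv_add_diagv:
  "(a::real^'d) - diagv e + diagv e = a"
  "(a::real^'d) - diagv e + diagv (2 * e) = a + diagv e"
  by (simp_all add: diagv_def vec_eq_iff)

definition ecard :: "'a set \<Rightarrow> enat" where
  "ecard S = (if finite S then enat (card S) else \<infinity>)"

lemma ecard_le_of_inj_on:
  assumes "inj_on h A" "h ` A \<subseteq> B"
  shows "ecard A \<le> ecard B"
proof (cases "finite B")
  case True
  then have "finite A" using assms finite_subset finite_imageD by metis
  moreover have "card A \<le> card B"
    using card_inj_on_le[OF assms True] .
  ultimately show ?thesis using True by (simp add: ecard_def)
qed (simp add: ecard_def)

lemma ecard_image: "inj_on h A \<Longrightarrow> ecard (h ` A) = ecard A"
  by (simp add: ecard_def card_image finite_image_iff)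

definition bars_through :: "'i set \<Rightarrow> ('i \<Rightarrow> (real^'d) set) \<Rightarrow> real^'d \<Rightarrow> real^'d \<Rightarrow> 'i set" where
  "bars_through I J a b = {i \<in> I. a \<in> J i \<and> b \<in> J i}"

lemma lin_on_zero:
  assumes "lin_on s1 s2 A B f" "(0::'v::ab_group_add) \<in> A"
  shows "f 0 = (0::'w::ab_group_add)"
proof -
  have "f (0 + 0) = f 0 + f 0" using assms unfolding lin_on_def by blast
  then show ?thesis by simp
qed

lemma lin_on_image_subset_span:
  assumes m: "module s" and A: "module.subspace s A" and f: "lin_on s s A B f"
    and G: "module.span s G = A" and fG: "f ` G \<subseteq> module.span s Y"
  shows "f ` A \<subseteq> module.span s Y"
proof -
  interpret module s by (rule m)
  let ?P = "{v \<in> A. f v \<in> span Y}"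
  have "subspace ?P"
  proof (rule subspaceI)
    show "0 \<in> ?P" using subspace_0[OF A] lin_on_zero[OF f] span_zero by auto
  next
    fix x y assume "x \<in> ?P" "y \<in> ?P"
    then show "x + y \<in> ?P" using subspace_add[OF A] f span_add unfolding lin_on_def by auto
  next
    fix c x assume "x \<in> ?P"
    then show "s c x \<in> ?P" using subspace_scale[OF A] f span_scale unfolding lin_on_def by auto
  qed
  moreover have "G \<subseteq> ?P" using G fG span_superset by blast
  ultimately have "A \<subseteq> ?P" using G span_minimal by blast
  then show ?thesis by blast
qed

lemma ecard_le_rank_on:
  assumes vs: "vector_space s" and X: "X \<subseteq> f ` A" "\<not> module.dependent s X"
  shows "ecard X \<le> rank_on s A f"
proof (cases "\<exists>B. finite B \<and> f ` A \<subseteq> module.span s B")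
  case True
  interpret vector_space s by (rule vs)
  obtain B where B: "finite B" "f ` A \<subseteq> span B" using True by blast
  obtain C where C: "X \<subseteq> C" "C \<subseteq> f ` A" "\<not> dependent C" "f ` A \<subseteq> span C"
    using maximal_independent_subset_extend[OF X] by blast
  have "finite C" using independent_span_bound[OF B(1) C(3)] C(2) B(2) by blast
  then have "finite X" "card X \<le> card C" using C(1) finite_subset card_mono by blast+
  moreover have "card C = dim (f ` A)" by (rule basis_card_eq_dim[OF C(2) C(4) C(3)])
  ultimately show ?thesis using True by (simp add: rank_on_def ecard_def)
qed (auto simp: rank_on_def)

lemma rank_on_le_card:
  assumes vs: "vector_space s" and Y: "finite Y" "f ` A \<subseteq> module.span s Y"
  shows "rank_on s A f \<le> enat (card Y)"
proof -
  interpret vector_space s by (rule vs)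
  have "rank_on s A f = enat (dim (f ` A))" using Y by (auto simp: rank_on_def)
  then show ?thesis using dim_le_card[OF Y(2,1)] by simp
qed

lemma interval_decompE:
  assumes "interval_decomp s V phi I J"
  obtains e where
    "\<And>i a. i \<in> I \<Longrightarrow> a \<in> J i \<Longrightarrow> e i a \<in> V a"
    "\<And>i a b. i \<in> I \<Longrightarrow> a \<le> b \<Longrightarrow> a \<in> J i \<Longrightarrow> b \<in> J i \<Longrightarrow> phi a b (e i a) = e i b"
    "\<And>i a b. i \<in> I \<Longrightarrow> a \<le> b \<Longrightarrow> a \<in> J i \<Longrightarrow> b \<notin> J i \<Longrightarrow> phi a b (e i a) = 0"
    "\<And>a. inj_on (\<lambda>i. e i a) {i \<in> I. a \<in> J i}"
    "\<And>a. \<not> module.dependent s ((\<lambda>i. e i a) ` {i \<in> I. a \<in> J i})"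
    "\<And>a. module.span s ((\<lambda>i. e i a) ` {i \<in> I. a \<in> J i}) = V a"
proof -
  obtain e where
    "\<forall>i\<in>I. \<forall>a\<in>J i. e i a \<in> V a"
    "\<forall>i\<in>I. \<forall>a b. a \<le> b \<longrightarrow> a \<in> J i \<longrightarrow> b \<in> J i \<longrightarrow> phi a b (e i a) = e i b"
    "\<forall>i\<in>I. \<forall>a b. a \<le> b \<longrightarrow> a \<in> J i \<longrightarrow> b \<notin> J i \<longrightarrow> phi a b (e i a) = 0"
    "\<forall>a. inj_on (\<lambda>i. e i a) {i \<in> I. a \<in> J i} \<and>
       \<not> module.dependent s ((\<lambda>i. e i a) ` {i \<in> I. a \<in> J i}) \<and>
       module.span s ((\<lambda>i. e i a) ` {i \<in> I. a \<in> J i}) = V a"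
    using assms unfolding interval_decomp_def by blast
  then show thesis by (intro that) auto
qed

lemma ecard_bars_through_le_rank_on:
  assumes vs: "vector_space s" and dec: "interval_decomp s V phi I J" and ab: "a \<le> b"
  shows "ecard (bars_through I J a b) \<le> rank_on s (V a) (phi a b)"
proof -
  obtain e where e_mem: "\<And>i a. i \<in> I \<Longrightarrow> a \<in> J i \<Longrightarrow> e i a \<in> V a"
    and e_map: "\<And>i a b. i \<in> I \<Longrightarrow> a \<le> b \<Longrightarrow> a \<in> J i \<Longrightarrow> b \<in> J i \<Longrightarrow> phi a b (e i a) = e i b"
    and e_inj: "\<And>a. inj_on (\<lambda>i. e i a) {i \<in> I. a \<in> J i}"
    and e_indep: "\<And>a. \<not> module.dependent s ((\<lambda>i. e i a) ` {i \<in> I. a \<in> J i})"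
    by (rule interval_decompE[OF dec], rule that) assumption+
  interpret vector_space s by (rule vs)
  let ?S = "bars_through I J a b"
  have sub: "?S \<subseteq> {i \<in> I. b \<in> J i}" by (auto simp: bars_through_def)
  have "(\<lambda>i. e i b) ` ?S \<subseteq> phi a b ` V a"
    using ab e_mem e_map by (force simp: bars_through_def)
  moreover have "\<not> dependent ((\<lambda>i. e i b) ` ?S)"
    using dependent_mono[OF _ image_mono[OF sub]] e_indep by blast
  ultimately have "ecard ((\<lambda>i. e i b) ` ?S) \<le> rank_on s (V a) (phi a b)"
    by (rule ecard_le_rank_on[OF vs])
  moreover have "inj_on (\<lambda>i. e i b) ?S" using e_inj sub by (rule inj_on_subset)
  ultimately show ?thesis by (simp add: ecard_image)
qed

lemma rank_on_le_ecard_bars_through: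
  assumes pm: "pmod s V phi" and dec: "interval_decomp s V phi I J" and ab: "a \<le> b"
  shows "rank_on s (V a) (phi a b) \<le> ecard (bars_through I J a b)"
proof (cases "finite (bars_through I J a b)")
  case True
  obtain e where e_map: "\<And>i a b. i \<in> I \<Longrightarrow> a \<le> b \<Longrightarrow> a \<in> J i \<Longrightarrow> b \<in> J i \<Longrightarrow> phi a b (e i a) = e i b"
    and e_zero: "\<And>i a b. i \<in> I \<Longrightarrow> a \<le> b \<Longrightarrow> a \<in> J i \<Longrightarrow> b \<notin> J i \<Longrightarrow> phi a b (e i a) = 0"
    and e_span: "\<And>a. module.span s ((\<lambda>i. e i a) ` {i \<in> I. a \<in> J i}) = V a"
    by (rule interval_decompE[OF dec], rule that) assumption+
  have vs: "vector_space s" using pm by (simp add: pmod_def)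
  interpret vector_space s by (rule vs)
  let ?Y = "(\<lambda>i. e i b) ` bars_through I J a b"
  have gens: "phi a b ` (\<lambda>i. e i a) ` {i \<in> I. a \<in> J i} \<subseteq> span ?Y"
  proof (rule image_subsetI, elim imageE CollectE conjE)
    fix x i assume x: "x = e i a" and i: "i \<in> I" "a \<in> J i"
    show "phi a b x \<in> span ?Y"
    proof (cases "b \<in> J i")
      case True
      then have "phi a b x \<in> ?Y" using x i ab e_map by (auto simp: bars_through_def)
      then show ?thesis by (rule span_base)
    qed (simp add: x i ab e_zero span_zero)
  qed
  have "module s" using vs by (simp add: vector_space_def module_def)
  moreover have "subspace (V a)" "lin_on s s (V a) (V b) (phi a b)"
    using pm ab by (simp_all add: pmod_def)
  ultimately have "phi a b ` V a \<subseteq> span ?Y"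
    by (rule lin_on_image_subset_span[OF _ _ _ e_span gens])
  then have "rank_on s (V a) (phi a b) \<le> enat (card ?Y)"
    using True by (intro rank_on_le_card[OF vs]) simp_all
  also have "\<dots> \<le> ecard (bars_through I J a b)"
    using True card_image_le by (simp add: ecard_def)
  finally show ?thesis .
qed (simp add: ecard_def)

lemma rank_inv_eq_ecard_bars_through:
  assumes "pmod s V phi" "interval_decomp s V phi I J" "a \<le> b"
  shows "rank_inv s V phi a b = ecard (bars_through I J a b)"
proof -
  have "vector_space s" using assms(1) by (simp add: pmod_def)
  then show ?thesis
    unfolding rank_inv_def if_P[OF assms(3)]
    by (intro antisym rank_on_le_ecard_bars_through[OF assms]
        ecard_bars_through_le_rank_on[OF _ assms(2,3)])
qed

lemma zsp_eq_ivsp_empty: "zsp = ivsp {}"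
  by (simp add: fun_eq_iff zsp_def ivsp_def)

lemma zmap_eq_ivmap_empty: "zmap = ivmap {}"
  by (simp add: fun_eq_iff zmap_def ivmap_def)

lemma interleaved_sym:
  "interleaved s1 V1 phi1 s2 V2 phi2 e \<Longrightarrow> interleaved s2 V2 phi2 s1 V1 phi1 e"
  unfolding interleaved_def by blast

lemma interleaved_interval_modules_mem:
  fixes J J' :: "(real^'d) set"
  assumes il: "interleaved ((*) :: 'k::field \<Rightarrow> 'k \<Rightarrow> 'k) (ivsp J) (ivmap J) (*) (ivsp J') (ivmap J') e"
    and J: "is_interval_pm J" and e: "e \<ge> 0" and ab: "a \<le> b"
    and a_J: "a - diagv e \<in> J" and b_J: "b + diagv e \<in> J"
  shows "a \<in> J' \<and> b \<in> J'"
proof (rule ccontr)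
  assume not_ab: "\<not> (a \<in> J' \<and> b \<in> J')"
  obtain f g :: "real^'d \<Rightarrow> 'k \<Rightarrow> 'k" where
    g_lin: "\<forall>c. lin_on (*) (*) (ivsp J' c) (ivsp J (c + diagv e)) (g c)" and
    f_nat: "\<forall>c d. c \<le> d \<longrightarrow> (\<forall>x\<in>ivsp J c.
      f d (ivmap J c d x) = ivmap J' (c + diagv e) (d + diagv e) (f c x))" and
    gf: "\<forall>c. \<forall>x\<in>ivsp J c. g (c + diagv e) (f c x) = ivmap J c (c + diagv (2 * e)) x"
    using il unfolding interleaved_def by blast
  have ab_shift: "a - diagv e \<le> b - diagv e" "b - diagv e \<le> b + diagv e"
    using diff_right_mono[OF ab] diff_le_add_of_nonneg[OF order_refl diagv_nonneg[OF e]]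
    by simp_all
  have b'_J: "b - diagv e \<in> J"
    using J a_J b_J ab_shift unfolding is_interval_pm_def by blast
  have "f (b - diagv e) 1 = f (b - diagv e) (ivmap J (a - diagv e) (b - diagv e) 1)"
    using a_J b'_J by (simp add: ivmap_def)
  also have "\<dots> = ivmap J' a b (f (a - diagv e) 1)"
    using f_nat[rule_format, OF ab_shift(1)] a_J by (simp add: ivsp_def diff_diagv_add_diagv)
  also have "\<dots> = 0" unfolding ivmap_def if_not_P[OF not_ab] ..
  finally have "g b (f (b - diagv e) 1) = 0"
    using lin_on_zero[OF g_lin[rule_format]] by (simp add: ivsp_def)
  moreover have "g b (f (b - diagv e) 1) = 1"
    using gf[rule_format, where c = "b - diagv e" and x = 1] b'_J b_J
    by (simp add: ivsp_def ivmap_def diff_diagv_add_diagv)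
  ultimately show False by simp
qed

lemma not_interleaved_zero_module:
  fixes J :: "(real^'d) set"
  assumes "interleaved ((*) :: 'k::field \<Rightarrow> 'k \<Rightarrow> 'k) (ivsp J) (ivmap J) (*) zsp zmap e"
    and "is_interval_pm J" "e \<ge> 0" "a \<le> b" "a - diagv e \<in> J" "b + diagv e \<in> J"
  shows False
  using interleaved_interval_modules_mem[where J' = "{}"] assms
  unfolding zsp_eq_ivsp_empty zmap_eq_ivmap_empty by blast

lemma eps_matching_sym:
  assumes "eps_matching I1 J1 I2 J2 TYPE('k::field) e"
  shows "eps_matching I2 J2 I1 J1 TYPE('k) e"
proof -
  obtain D \<sigma> where D: "D \<subseteq> I1" "inj_on \<sigma> D" "\<sigma> ` D \<subseteq> I2"
    and matched: "\<forall>i\<in>D. interleaved ((*) :: 'k \<Rightarrow> 'k \<Rightarrow> 'k) (ivsp (J1 i)) (ivmap (J1 i))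
      (*) (ivsp (J2 (\<sigma> i))) (ivmap (J2 (\<sigma> i))) e"
    and rest: "\<forall>i\<in>I1 - D. interleaved ((*) :: 'k \<Rightarrow> 'k \<Rightarrow> 'k) (ivsp (J1 i)) (ivmap (J1 i)) (*) zsp zmap e"
      "\<forall>j\<in>I2 - \<sigma> ` D. interleaved ((*) :: 'k \<Rightarrow> 'k \<Rightarrow> 'k) (ivsp (J2 j)) (ivmap (J2 j)) (*) zsp zmap e"
    using assms unfolding eps_matching_def by blast
  let ?\<tau> = "inv_into D \<sigma>"
  have "?\<tau> ` \<sigma> ` D = D" using D(2) by simp
  moreover have "\<forall>j\<in>\<sigma> ` D. interleaved ((*) :: 'k \<Rightarrow> 'k \<Rightarrow> 'k) (ivsp (J2 j)) (ivmap (J2 j)) (*)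
      (ivsp (J1 (?\<tau> j))) (ivmap (J1 (?\<tau> j))) e"
    using matched D(2) by (auto intro: interleaved_sym)
  moreover have "inj_on ?\<tau> (\<sigma> ` D)" by (rule inj_on_inv_into) (rule order_refl)
  ultimately show ?thesis
    using D rest unfolding eps_matching_def by metis
qed

lemma ecard_bars_through_shift_le:
  assumes m: "eps_matching I1 J1 I2 J2 TYPE('k::field) e" and e: "e \<ge> 0" and ab: "a \<le> b"
    and J1: "\<forall>i\<in>I1. is_interval_pm (J1 i)"
  shows "ecard (bars_through I1 J1 (a - diagv e) (b + diagv e)) \<le> ecard (bars_through I2 J2 a b)"
proof -
  obtain D \<sigma> where D: "D \<subseteq> I1" "inj_on \<sigma> D" "\<sigma> ` D \<subseteq> I2"
    and matched: "\<forall>i\<in>D. interleaved ((*) :: 'k \<Rightarrow> 'k \<Rightarrow> 'k) (ivsp (J1 i)) (ivmap (J1 i))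
      (*) (ivsp (J2 (\<sigma> i))) (ivmap (J2 (\<sigma> i))) e"
    and unmatched: "\<forall>i\<in>I1 - D. interleaved ((*) :: 'k \<Rightarrow> 'k \<Rightarrow> 'k) (ivsp (J1 i)) (ivmap (J1 i))
      (*) zsp zmap e"
    using m unfolding eps_matching_def by blast
  let ?S = "bars_through I1 J1 (a - diagv e) (b + diagv e)"
  have "?S \<subseteq> D"
    using unmatched J1 not_interleaved_zero_module[OF _ _ e ab] by (auto simp: bars_through_def)
  moreover have "\<sigma> ` (?S \<inter> D) \<subseteq> bars_through I2 J2 a b"
    using matched J1 D(3) interleaved_interval_modules_mem[OF _ _ e ab]
    by (fastforce simp: bars_through_def)
  ultimately show ?thesis
    using D(2) by (intro ecard_le_of_inj_on[where h = \<sigma>]) (auto intro: inj_on_subset)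
qed

lemma rank_inv_shift_le:
  assumes M: "pmod s1 V1 phi1" "interval_decomp s1 V1 phi1 I1 J1"
    and N: "pmod s2 V2 phi2" "interval_decomp s2 V2 phi2 I2 J2"
    and m: "eps_matching I1 J1 I2 J2 TYPE('k::field) e" and e: "e \<ge> 0"
  shows "rank_inv s1 V1 phi1 (a - diagv e) (b + diagv e) \<le> rank_inv s2 V2 phi2 a b"
proof (cases "a \<le> b")
  case True
  have "a - diagv e \<le> b + diagv e"
    using diff_le_add_of_nonneg[OF True diagv_nonneg[OF e]] .
  moreover have "\<forall>i\<in>I1. is_interval_pm (J1 i)"
    using M(2) by (simp add: interval_decomp_def)
  ultimately show ?thesis
    using ecard_bars_through_shift_le[OF m e True]
    by (simp add: rank_inv_eq_ecard_bars_through[OF M] rank_inv_eq_ecard_bars_through[OF N True])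
qed (simp add: rank_inv_def)

theorem corollary6p4:
  fixes sM :: "'k::field \<Rightarrow> 'v::ab_group_add \<Rightarrow> 'v"
    and VM :: "real^'d \<Rightarrow> 'v set" and phiM :: "real^'d \<Rightarrow> real^'d \<Rightarrow> 'v \<Rightarrow> 'v"
    and sN :: "'k \<Rightarrow> 'w::ab_group_add \<Rightarrow> 'w"
    and VN :: "real^'d \<Rightarrow> 'w set" and phiN :: "real^'d \<Rightarrow> real^'d \<Rightarrow> 'w \<Rightarrow> 'w"
    and IM :: "'i set" and JM :: "'i \<Rightarrow> (real^'d) set"
    and IN :: "'j set" and JN :: "'j \<Rightarrow> (real^'d) set"
  assumes "pmod sM VM phiM" and "pmod sN VN phiN"
    and "interval_decomp sM VM phiM IM JM"
    and "interval_decomp sN VN phiN IN JN"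
  shows "dist_I2d (rank_inv sM VM phiM) (rank_inv sN VN phiN)
           \<le> bottleneck TYPE('k) IM JM IN JN"
proof -
  have "rank_inv sN VN phiN (a - diagv e) (b + diagv e) \<le> rank_inv sM VM phiM a b \<and>
        rank_inv sM VM phiM (a - diagv e) (b + diagv e) \<le> rank_inv sN VN phiN a b"
    if m: "eps_matching IM JM IN JN TYPE('k) e" and e: "e \<ge> 0" for e a b
    using rank_inv_shift_le[OF assms(1,3,2,4) m e]
      rank_inv_shift_le[OF assms(2,4,1,3) eps_matching_sym[OF m] e] by blast
  then show ?thesis
    unfolding dist_I2d_def bottleneck_def by (intro Inf_superset_mono) blast
qed

end
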